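(* If $G$ is a connected cubic graph with $n$ vertices, then $rc(L^2(G))\leq n+1$.
   Context: All graphs are simple, finite and undirected. $L(G)$ is the line graph of $G$ and $L^2(G)=L(L(G))$ is the iterated line graph. For an edge-colouring of a graph (adjacent edges may receive the same colour), a path is rainbow if no two of its edges have the same colour; the graph is rainbow connected if every two vertices are joined by a rainbow path. The rainbow connection number $rc(H)$ of a connected graph $H$ is the smallest number of colours in an edge-colouring making $H$ rainbow connected. *)

theory Defs
  imports Main
begin

type_synonym 'a graph = "'a set \<times> 'a set set"

definition simple_graph :: "'a graph \<Rightarrow> bool" where
  "simple_graph G \<longleftrightarrow> finite (fst G) \<and>
     (\<forall>e\<in>snd G. \<exists>u v. u \<in> fst G \<and> v \<in> fst G \<and> u \<noteq> v \<and> e = {u, v})"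

definition line_graph :: "'a graph \<Rightarrow> 'a set graph" where
  "line_graph G = (snd G, {{e, f} | e f. e \<in> snd G \<and> f \<in> snd G \<and> e \<noteq> f \<and> e \<inter> f \<noteq> {}})"

definition degree :: "'a graph \<Rightarrow> 'a \<Rightarrow> nat" where
  "degree G v = card {e \<in> snd G. v \<in> e}"

definition cubic :: "'a graph \<Rightarrow> bool" where
  "cubic G \<longleftrightarrow> (\<forall>v\<in>fst G. degree G v = 3)"

definition is_path :: "'a graph \<Rightarrow> 'a list \<Rightarrow> bool" where
  "is_path G p \<longleftrightarrow> p \<noteq> [] \<and> distinct p \<and> set p \<subseteq> fst G \<and>
     (\<forall>i < length p - 1. {p ! i, p ! (i + 1)} \<in> snd G)"

definition path_edges :: "'a list \<Rightarrow> 'a set list" where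
  "path_edges p = map (\<lambda>i. {p ! i, p ! (i + 1)}) [0..<length p - 1]"

definition connected_graph :: "'a graph \<Rightarrow> bool" where
  "connected_graph G \<longleftrightarrow> fst G \<noteq> {} \<and>
     (\<forall>u\<in>fst G. \<forall>v\<in>fst G. \<exists>p. is_path G p \<and> hd p = u \<and> last p = v)"

definition rainbow_path :: "('a set \<Rightarrow> nat) \<Rightarrow> 'a list \<Rightarrow> bool" where
  "rainbow_path c p \<longleftrightarrow> distinct (map c (path_edges p))"

definition rainbow_connected :: "'a graph \<Rightarrow> ('a set \<Rightarrow> nat) \<Rightarrow> bool" where
  "rainbow_connected G c \<longleftrightarrow>
     (\<forall>u\<in>fst G. \<forall>v\<in>fst G. \<exists>p. is_path G p \<and> hd p = u \<and> last p = v \<and> rainbow_path c p)"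

definition rc :: "'a graph \<Rightarrow> nat" where
  "rc G = (LEAST k. \<exists>c :: 'a set \<Rightarrow> nat. (\<forall>e\<in>snd G. c e < k) \<and> rainbow_connected G c)"

end

theory Submission
  imports Defs
begin

text \<open>Number the \<open>n - 1\<close> edges of a spanning tree \<open>T\<close> of \<open>G\<close> by \<open>0, \<dots>, n - 2\<close>.
  A vertex of \<open>L\<^sup>2(G)\<close> is an angle, a pair of edges meeting in its apex, and an edge of
  \<open>L\<^sup>2(G)\<close> pivots about the edge shared by its two angles. Colour it by the number of the pivot
  when that is a tree edge, and otherwise by \<open>n - 1\<close> or \<open>n\<close>, the former exactly when the edge
  rotates about a vertex \<open>w\<close> and pivots about a fixed non-tree edge at \<open>w\<close>.
  Two angles with a common apex are adjacent, since the apex has only three edges. Otherwise the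
  corners along the shortest tree path between the apexes form a path in \<open>L\<^sup>2(G)\<close> pivoting
  about distinct tree edges; at each end one rotation about the apex joins the given angle to it,
  pivoting about a tree edge not on the path or about a non-tree edge chosen so that the first
  rotation gets colour \<open>n - 1\<close> and the last one colour \<open>n\<close>.\<close>

section \<open>Walks and paths\<close>

fun walk :: "'a set set \<Rightarrow> 'a list \<Rightarrow> bool" where
  "walk T [] = False"
| "walk T [x] = True"
| "walk T (x # y # r) \<longleftrightarrow> {x, y} \<in> T \<and> walk T (y # r)"

lemma walk_iff_nth:
  "p \<noteq> [] \<Longrightarrow> walk T p \<longleftrightarrow> (\<forall>i < length p - 1. {p ! i, p ! (i + 1)} \<in> T)"
proof (induction T p rule: walk.induct)
  case (3 T x y r)
  then show ?case by (simp add: All_less_Suc2)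
qed auto

lemma is_path_iff_walk:
  "is_path G p \<longleftrightarrow> distinct p \<and> set p \<subseteq> fst G \<and> walk (snd G) p"
  by (cases "p = []") (auto simp: is_path_def walk_iff_nth)

lemma walk_not_Nil: "walk T p \<Longrightarrow> p \<noteq> []"
  by auto

lemma walk_mono: "walk T p \<Longrightarrow> T \<subseteq> T' \<Longrightarrow> walk T' p"
  by (induction T p rule: walk.induct) auto

lemma walk_append: "walk T (p @ x # q) \<longleftrightarrow> walk T (p @ [x]) \<and> walk T (x # q)"
proof (induction p)
  case (Cons a p)
  then show ?case by (cases p) auto
qed simp

lemma walk_Cons: "p \<noteq> [] \<Longrightarrow> walk T (x # p) \<longleftrightarrow> {x, hd p} \<in> T \<and> walk T p"
  by (cases p) auto

lemma walk_snoc: "p \<noteq> [] \<Longrightarrow> walk T (p @ [z]) \<longleftrightarrow> walk T p \<and> {last p, z} \<in> T"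
proof (induction p)
  case (Cons a p)
  then show ?case by (cases p) auto
qed simp

lemma walk_join:
  assumes "walk T p" "walk T q" "last p = hd q"
  shows "walk T (butlast p @ q)" "hd (butlast p @ q) = hd p" "last (butlast p @ q) = last q"
proof -
  have p: "butlast p @ [hd q] = p"
    using append_butlast_last_id[OF walk_not_Nil[OF assms(1)]] assms(3) by simp
  have q: "hd q # tl q = q"
    using walk_not_Nil[OF assms(2)] by simp
  have "walk T (butlast p @ hd q # tl q)"
    using walk_append[of T "butlast p" "hd q" "tl q"] p q assms(1,2) by simp
  then show "walk T (butlast p @ q)"
    using q by simp
  have "hd p = hd (butlast p @ [hd q])"
    using p by simp
  then show "hd (butlast p @ q) = hd p"
    by (simp add: hd_append)
  show "last (butlast p @ q) = last q"
    using walk_not_Nil[OF assms(2)] by simp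
qed

lemma walk_extend_ends:
  assumes "walk T xs" "{y, hd xs} \<in> T" "{last xs, z} \<in> T"
  shows "walk T (y # xs @ [z])"
proof -
  have "xs \<noteq> []"
    using assms(1) by (rule walk_not_Nil)
  then have "walk T (xs @ [z])"
    using assms(1,3) by (simp add: walk_snoc)
  then show ?thesis
    using walk_Cons[of "xs @ [z]" T y] assms(2) \<open>xs \<noteq> []\<close> by simp
qed

lemma walk_leaves_set:
  "walk T p \<Longrightarrow> hd p \<in> S \<Longrightarrow> last p \<notin> S \<Longrightarrow> \<exists>a b. {a, b} \<in> T \<and> a \<in> S \<and> b \<notin> S"
  by (induction T p rule: walk.induct) auto

lemma shortest_walk:
  assumes "walk T p" "hd p = u" "last p = v"
  obtains xs where "walk T xs" "hd xs = u" "last xs = v" "distinct xs"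
    "3 \<le> length xs \<Longrightarrow> {u, v} \<notin> T"
proof -
  let ?P = "\<lambda>xs. walk T xs \<and> hd xs = u \<and> last xs = v"
  obtain xs where xs: "?P xs" and min: "\<And>ys. ?P ys \<Longrightarrow> length xs \<le> length ys"
    using ex_has_least_nat[of ?P p length] assms by blast
  have "distinct xs"
  proof (rule ccontr)
    assume "\<not> distinct xs"
    then obtain as y bs cs where xs_eq: "xs = as @ [y] @ bs @ [y] @ cs"
      using not_distinct_decomp by blast
    \<comment> \<open>cutting out the cycle between the two occurrences of y gives a shorter walk\<close>
    have "walk T (as @ y # cs)"
      using xs xs_eq walk_append[of T as y "bs @ y # cs"] walk_append[of T "y # bs" y cs]
        walk_append[of T as y cs] by auto
    moreover have "hd (as @ y # cs) = u"
      using xs xs_eq by (cases as) auto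
    moreover have "last (as @ y # cs) = v"
      using xs xs_eq by (cases cs) auto
    ultimately show False
      using min[of "as @ y # cs"] xs_eq by simp
  qed
  moreover have "{u, v} \<notin> T" if "3 \<le> length xs"
    using min[of "[u, v]"] that by auto
  ultimately show thesis
    using that xs by blast
qed

lemma path_edges_simps [simp]:
  "path_edges [] = []" "path_edges [x] = []"
  "path_edges (x # y # r) = {x, y} # path_edges (y # r)"
proof -
  have "[0..<length (x # y # r) - 1] = 0 # map Suc [0..<length (y # r) - 1]"
    by (simp add: upt_conv_Cons map_Suc_upt del: upt_Suc)
  then show "path_edges (x # y # r) = {x, y} # path_edges (y # r)"
    by (simp add: path_edges_def)
qed (simp_all add: path_edges_def)

lemma path_edges_Cons: "p \<noteq> [] \<Longrightarrow> path_edges (x # p) = {x, hd p} # path_edges p"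
  by (cases p) auto

lemma path_edges_snoc: "p \<noteq> [] \<Longrightarrow> path_edges (p @ [x]) = path_edges p @ [{last p, x}]"
proof (induction p)
  case (Cons a p)
  then show ?case by (cases p) auto
qed simp

lemma path_edge_subset: "e \<in> set (path_edges p) \<Longrightarrow> e \<subseteq> set p"
proof (induction p)
  case (Cons a p)
  then show ?case by (cases p) auto
qed simp

lemma distinct_path_edges: "distinct p \<Longrightarrow> distinct (path_edges p)"
proof (induction p)
  case (Cons a p)
  then show ?case by (cases p) (auto dest: path_edge_subset)
qed simp

lemma walk_path_edges: "walk T p \<Longrightarrow> set (path_edges p) \<subseteq> T"
  by (induction T p rule: walk.induct) auto

lemma notin_path_edges_at_hd:
  assumes "distinct (w # x # r)" "w \<in> s" "s \<noteq> {w, x}"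
  shows "s \<notin> set (path_edges (w # x # r))"
  using assms path_edge_subset by fastforce

lemma notin_path_edges_at_last:
  assumes "distinct (p @ [u, v])" "v \<in> s" "s \<noteq> {u, v}"
  shows "s \<notin> set (path_edges (p @ [u, v]))"
  using assms path_edge_subset path_edges_snoc[of "p @ [u]" v] by fastforce

lemma is_path_Cons:
  "is_path G P \<Longrightarrow> a \<in> fst G \<Longrightarrow> a \<notin> set P \<Longrightarrow> {a, hd P} \<in> snd G \<Longrightarrow> is_path G (a # P)"
  by (cases P) (auto simp: is_path_iff_walk)

lemma is_path_snoc:
  assumes "is_path G P" "b \<in> fst G" "b \<notin> set P" "{last P, b} \<in> snd G"
  shows "is_path G (P @ [b])"
proof -
  have "P \<noteq> []"
    using assms(1) by (simp add: is_path_def)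
  then show ?thesis
    using assms by (simp add: is_path_iff_walk walk_snoc)
qed

lemma rainbow_path_Cons:
  "P \<noteq> [] \<Longrightarrow> rainbow_path c (a # P) \<longleftrightarrow> c {a, hd P} \<notin> c ` set (path_edges P) \<and> rainbow_path c P"
  by (simp add: rainbow_path_def path_edges_Cons)

lemma rainbow_path_snoc:
  "P \<noteq> [] \<Longrightarrow> rainbow_path c (P @ [b]) \<longleftrightarrow> rainbow_path c P \<and> c {last P, b} \<notin> c ` set (path_edges P)"
  unfolding rainbow_path_def by (simp add: path_edges_snoc)

lemma rainbow_path_extend_ends:
  assumes M: "is_path G M" "rainbow_path c M"
    and ab: "a \<in> fst G" "b \<in> fst G" "a \<noteq> b" "a \<in> set M \<Longrightarrow> a = hd M" "b \<in> set M \<Longrightarrow> b = last M"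
    and a_step: "a = hd M \<or> {a, hd M} \<in> snd G \<and> c {a, hd M} = ca"
    and b_step: "b = last M \<or> {b, last M} \<in> snd G \<and> c {b, last M} = cb"
    and fresh: "ca \<notin> c ` set (path_edges M)" "cb \<notin> c ` set (path_edges M)" "ca \<noteq> cb"
  obtains P where "is_path G P" "hd P = a" "last P = b" "rainbow_path c P"
proof -
  have "M \<noteq> []"
    using M(1) by (simp add: is_path_def)
  obtain P' where P': "is_path G P'" "rainbow_path c P'" "hd P' = a" "last P' = last M"
    "set P' \<subseteq> insert a (set M)" "c ` set (path_edges P') \<subseteq> insert ca (c ` set (path_edges M))"
  proof (cases "a = hd M")
    case True
    then show thesis
      using that[of M] M by blast
  next
    case False
    then have "a \<notin> set M" "{a, hd M} \<in> snd G" "c {a, hd M} = ca"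
      using ab(4) a_step by auto
    then show thesis
      using that[of "a # M"] M fresh(1) ab(1) \<open>M \<noteq> []\<close>
      by (auto simp: is_path_Cons rainbow_path_Cons path_edges_Cons)
  qed
  have "P' \<noteq> []"
    using P'(1) by (simp add: is_path_def)
  show thesis
  proof (cases "b = last M")
    case True
    then show thesis
      using that P' by blast
  next
    case False
    then have "b \<notin> set P'"
      using P'(5) ab(3,5) by blast
    moreover have "{last P', b} = {b, last M}"
      using P'(4) by (simp add: insert_commute)
    moreover have "{b, last M} \<in> snd G" "c {b, last M} = cb"
      using b_step False by auto
    ultimately show thesis
      using that[of "P' @ [b]"] P' fresh(2,3) ab(2) \<open>P' \<noteq> []\<close>
      by (auto simp: is_path_snoc rainbow_path_snoc)
  qed
qed

section \<open>Spanning trees\<close>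

definition walk_connected :: "'a set set \<Rightarrow> 'a set \<Rightarrow> bool" where
  "walk_connected T S \<longleftrightarrow> (\<forall>u\<in>S. \<forall>v\<in>S. \<exists>p. walk T p \<and> hd p = u \<and> last p = v)"

lemma connected_graph_walk_connected: "connected_graph G \<Longrightarrow> walk_connected (snd G) (fst G)"
  unfolding connected_graph_def walk_connected_def is_path_iff_walk by blast

lemma walk_connected_insert:
  assumes conn: "walk_connected T S" and "a \<in> S"
  shows "walk_connected (insert {a, b} T) (insert b S)"
  unfolding walk_connected_def
proof (intro ballI)
  let ?T = "insert {a, b} T"
  have old: "\<exists>p. walk ?T p \<and> hd p = x \<and> last p = y" if "x \<in> S" "y \<in> S" for x y
    using conn that walk_mono[of T _ ?T] unfolding walk_connected_def by blast
  have ab: "walk ?T [a, b]" "walk ?T [b, a]"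
    by (simp_all add: insert_commute)
  fix x y
  assume "x \<in> insert b S" "y \<in> insert b S"
  then consider "x \<in> S" "y \<in> S" | "x = b" "y = b" | "x = b" "y \<in> S" | "x \<in> S" "y = b"
    by blast
  then show "\<exists>p. walk ?T p \<and> hd p = x \<and> last p = y"
  proof cases
    case 2
    then show ?thesis
      by (intro exI[of _ "[b]"]) simp
  next
    case 3
    obtain q where "walk ?T q" "hd q = a" "last q = y"
      using old[OF \<open>a \<in> S\<close> \<open>y \<in> S\<close>] by blast
    then show ?thesis
      using walk_join[OF ab(2), of q] 3 by (intro exI[of _ "butlast [b, a] @ q"]) simp
  next
    case 4
    obtain q where "walk ?T q" "hd q = x" "last q = a"
      using old[OF \<open>x \<in> S\<close> \<open>a \<in> S\<close>] by blast
    then show ?thesis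
      using walk_join[OF _ ab(1), of q] 4 by (intro exI[of _ "butlast q @ [a, b]"]) simp
  qed (use old in blast)
qed

lemma spanning_tree_step:
  assumes "walk_connected E V" "\<Union>E \<subseteq> V" "S \<subseteq> V" "S \<noteq> {}" "S \<noteq> V"
    "\<Union>T \<subseteq> S" "walk_connected T S"
  obtains a b where "{a, b} \<in> E" "{a, b} \<notin> T" "a \<in> S" "b \<in> V - S"
    "walk_connected (insert {a, b} T) (insert b S)"
proof -
  obtain u v where "u \<in> S" "v \<in> V - S"
    using assms(3-5) by blast
  then obtain p where "walk E p" "hd p = u" "last p = v"
    using assms(1,3) unfolding walk_connected_def by blast
  then obtain a b where ab: "{a, b} \<in> E" "a \<in> S" "b \<notin> S"
    using walk_leaves_set \<open>u \<in> S\<close> \<open>v \<in> V - S\<close> by blast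
  show thesis
  proof (rule that[OF ab(1)])
    show "{a, b} \<notin> T" "a \<in> S" "b \<in> V - S"
      using ab assms(2,6) by blast+
    show "walk_connected (insert {a, b} T) (insert b S)"
      using walk_connected_insert[OF assms(7) ab(2)] .
  qed
qed

lemma spanning_tree_exists:
  assumes "finite V" "V \<noteq> {}" "\<Union>E \<subseteq> V" "walk_connected E V"
  obtains T where "T \<subseteq> E" "finite T" "card T + 1 = card V" "walk_connected T V"
proof -
  have grow: "\<exists>S T. S \<subseteq> V \<and> card S = Suc k \<and> T \<subseteq> E \<and> finite T \<and> card T = k \<and> \<Union>T \<subseteq> S
      \<and> walk_connected T S" if "Suc k \<le> card V" for k
    using that
  proof (induction k)
    case 0
    obtain v where "v \<in> V"
      using assms(2) by blast
    then show ?case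
      by (intro exI[of _ "{v}"] exI[of _ "{}"]) (auto simp: walk_connected_def intro!: exI[of _ "[v]"])
  next
    case (Suc k)
    then obtain S T where ST: "S \<subseteq> V" "card S = Suc k" "T \<subseteq> E" "finite T" "card T = k"
      "\<Union>T \<subseteq> S" "walk_connected T S"
      by (meson Suc_leD)
    have "S \<noteq> {}" "S \<noteq> V"
      using ST(2) Suc.prems by auto
    then obtain a b where ab: "{a, b} \<in> E" "{a, b} \<notin> T" "a \<in> S" "b \<in> V - S"
      "walk_connected (insert {a, b} T) (insert b S)"
      using spanning_tree_step[OF assms(4,3) ST(1) _ _ ST(6,7)] by blast
    have "finite S"
      using ST(1) assms(1) by (rule finite_subset)
    then show ?case
      by (intro exI[of _ "insert b S"] exI[of _ "insert {a, b} T"]) (use ST ab in auto)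
  qed
  have "Suc (card V - 1) = card V"
    using assms(1,2) by (simp add: card_gt_0_iff)
  then obtain S T where ST: "S \<subseteq> V" "card S = card V" "T \<subseteq> E" "finite T" "card T + 1 = card V"
    "walk_connected T S"
    using grow[of "card V - 1"] by auto
  moreover have "S = V"
    using card_subset_eq[OF assms(1) ST(1,2)] .
  ultimately show thesis
    using that by blast
qed

section \<open>Angles of a cubic graph\<close>

fun no_backtrack :: "'a list \<Rightarrow> bool" where
  "no_backtrack (a # b # c # r) \<longleftrightarrow> a \<noteq> c \<and> no_backtrack (b # c # r)"
| "no_backtrack _ = True"

lemma distinct_no_backtrack: "distinct p \<Longrightarrow> no_backtrack p"
  by (induction p rule: no_backtrack.induct) auto

lemma no_backtrack_Cons2:
  "no_backtrack (x # y # q) \<longleftrightarrow> (q = [] \<or> x \<noteq> hd q) \<and> no_backtrack (y # q)"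
  by (cases q) auto

lemma no_backtrack_snoc:
  "no_backtrack (p @ [a, b, z]) \<longleftrightarrow> no_backtrack (p @ [a, b]) \<and> a \<noteq> z"
proof (induction p rule: induct_list012)
  case (3 x y zs)
  then show ?case
    by (simp add: no_backtrack_Cons2 hd_append)
qed simp_all

lemma no_backtrack_extend_ends:
  assumes "distinct xs" "xs = w # x # r" "xs = p @ [u, v]" "y \<noteq> x" "z \<noteq> u"
  shows "no_backtrack (y # xs @ [z])"
proof -
  have "no_backtrack (xs @ [z])"
    using distinct_no_backtrack[OF assms(1)] assms(5) unfolding assms(3) by (simp add: no_backtrack_snoc)
  then show ?thesis
    using assms(4) unfolding assms(2) by (simp add: no_backtrack_Cons2)
qed

fun angle_chain :: "'a list \<Rightarrow> 'a set set list" where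
  "angle_chain (a # b # c # r) = {{a, b}, {b, c}} # angle_chain (b # c # r)"
| "angle_chain _ = []"

lemma last_angle_chain: "last (angle_chain (p @ [a, b, c])) = {{a, b}, {b, c}}"
proof (induction p rule: induct_list012)
  case (3 x y zs)
  obtain d e r where "zs @ [a, b, c] = d # e # r"
    by (cases zs; cases "tl zs") auto
  with "3.IH"(2) show ?case
    by simp
qed simp_all

locale cubic_graph =
  fixes V :: "'a set" and E :: "'a set set"
  assumes simple: "simple_graph (V, E)" and cubic: "cubic (V, E)"
begin

lemma finite_V: "finite V"
  using simple by (simp add: simple_graph_def)

lemma edge_pair: "e \<in> E \<Longrightarrow> \<exists>u v. u \<in> V \<and> v \<in> V \<and> u \<noteq> v \<and> e = {u, v}"
  using simple by (simp add: simple_graph_def)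

lemma card_incident_edges: "v \<in> V \<Longrightarrow> card {e \<in> E. v \<in> e} = 3"
  using cubic by (simp add: cubic_def degree_def)

lemma finite_E: "finite E"
  by (rule finite_subset[of _ "Pow V"]) (use edge_pair finite_V in auto)

lemma edge_ends_distinct: "{a, b} \<in> E \<Longrightarrow> a \<noteq> b"
  using edge_pair by (force simp: doubleton_eq_iff)

lemma edge_subset_V: "e \<in> E \<Longrightarrow> x \<in> e \<Longrightarrow> x \<in> V"
  using edge_pair by blast

lemma edge_other_end:
  assumes "e \<in> E" "w \<in> e"
  obtains y where "y \<noteq> w" "e = {w, y}"
proof -
  obtain u v where "u \<noteq> v" "e = {u, v}"
    using edge_pair[OF assms(1)] by blast
  then show thesis
    using assms(2) that[of u] that[of v] by (auto simp: insert_commute)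
qed

lemma edge_eq_doubleton: "e \<in> E \<Longrightarrow> w \<in> e \<Longrightarrow> w' \<in> e \<Longrightarrow> w \<noteq> w' \<Longrightarrow> e = {w, w'}"
  using edge_pair by fastforce

lemma edges_meet_at_most_once:
  "e \<in> E \<Longrightarrow> f \<in> E \<Longrightarrow> e \<noteq> f \<Longrightarrow> w \<in> e \<inter> f \<Longrightarrow> w' \<in> e \<inter> f \<Longrightarrow> w = w'"
  using edge_eq_doubleton by blast

lemma incident_edges_eq:
  assumes "w \<in> V" "e \<in> E" "f \<in> E" "t \<in> E" "w \<in> e" "w \<in> f" "w \<in> t"
    "e \<noteq> f" "e \<noteq> t" "f \<noteq> t"
  shows "{x \<in> E. w \<in> x} = {e, f, t}"
proof (rule card_subset_eq[symmetric])
  show "finite {x \<in> E. w \<in> x}"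
    using finite_E by simp
  show "{e, f, t} \<subseteq> {x \<in> E. w \<in> x}"
    using assms by blast
  show "card {e, f, t} = card {x \<in> E. w \<in> x}"
    using assms card_incident_edges[OF assms(1)] by simp
qed

definition angles :: "'a set set set" where
  "angles = {{e, f} | e f. e \<in> E \<and> f \<in> E \<and> e \<noteq> f \<and> e \<inter> f \<noteq> {}}"

definition angle_edges :: "'a set set set set" where
  "angle_edges = {{X, Y} | X Y. X \<in> angles \<and> Y \<in> angles \<and> X \<noteq> Y \<and> X \<inter> Y \<noteq> {}}"

lemma line_graph_line_graph: "line_graph (line_graph (V, E)) = (angles, angle_edges)"
  by (simp add: line_graph_def angles_def angle_edges_def)

lemma anglesI: "e \<in> E \<Longrightarrow> f \<in> E \<Longrightarrow> e \<noteq> f \<Longrightarrow> x \<in> e \<Longrightarrow> x \<in> f \<Longrightarrow> {e, f} \<in> angles"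
  unfolding angles_def by blast

lemma angle_edgesI:
  "X \<in> angles \<Longrightarrow> Y \<in> angles \<Longrightarrow> X \<noteq> Y \<Longrightarrow> X \<inter> Y \<noteq> {} \<Longrightarrow> {X, Y} \<in> angle_edges"
  unfolding angle_edges_def by blast

definition apex :: "'a set set \<Rightarrow> 'a" where
  "apex X = (THE w. \<forall>e\<in>X. w \<in> e)"

lemma apex_unique:
  assumes "X \<in> angles"
  shows "\<exists>!w. \<forall>e\<in>X. w \<in> e"
proof -
  obtain e f w where "X = {e, f}" "e \<in> E" "f \<in> E" "e \<noteq> f" "w \<in> e" "w \<in> f"
    using assms unfolding angles_def by blast
  then show ?thesis
    using edges_meet_at_most_once[of e f] by auto
qed

lemma apex_eq: "X \<in> angles \<Longrightarrow> \<forall>e\<in>X. w \<in> e \<Longrightarrow> apex X = w"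
  unfolding apex_def by (rule the1_equality[OF apex_unique])

lemma angle_cases:
  assumes "X \<in> angles"
  obtains e f where "X = {e, f}" "e \<in> E" "f \<in> E" "e \<noteq> f" "apex X \<in> e" "apex X \<in> f"
proof -
  have "\<forall>e\<in>X. apex X \<in> e"
    unfolding apex_def using theI'[OF apex_unique[OF assms]] .
  then show thesis
    using assms that unfolding angles_def by blast
qed

lemma apex_in_V: "X \<in> angles \<Longrightarrow> apex X \<in> V"
  by (erule angle_cases) (blast intro: edge_subset_V)

lemma angles_same_apex_adjacent:
  assumes X: "X \<in> angles" and Y: "Y \<in> angles" and apex: "apex X = apex Y" and "X \<noteq> Y"
  shows "{X, Y} \<in> angle_edges"
proof -
  define w where "w = apex X"
  obtain e f where e: "X = {e, f}" "e \<in> E" "f \<in> E" "e \<noteq> f" "w \<in> e" "w \<in> f"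
    using angle_cases[OF X] unfolding w_def by blast
  obtain e' f' where e': "Y = {e', f'}" "e' \<in> E" "f' \<in> E" "e' \<noteq> f'" "w \<in> e'" "w \<in> f'"
    using angle_cases[OF Y] unfolding w_def apex by blast
  \<comment> \<open>two disjoint angles at the same apex would need four edges there\<close>
  have "X \<inter> Y \<noteq> {}"
  proof
    assume "X \<inter> Y = {}"
    then have "card (X \<union> Y) = 4"
      using e e' by (simp add: card_Un_disjoint)
    moreover have "card (X \<union> Y) \<le> card {x \<in> E. w \<in> x}"
      by (rule card_mono) (use finite_E e e' in auto)
    ultimately show False
      using card_incident_edges[OF apex_in_V[OF X]] unfolding w_def by simp
  qed
  then show ?thesis
    using angle_edgesI X Y \<open>X \<noteq> Y\<close> by blast
qed

lemma corner_in_angles: "{a, b} \<in> E \<Longrightarrow> {b, c} \<in> E \<Longrightarrow> a \<noteq> c \<Longrightarrow> {{a, b}, {b, c}} \<in> angles"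
  by (rule anglesI[of _ _ b]) (auto simp: doubleton_eq_iff)

lemma apex_corner: "{a, b} \<in> E \<Longrightarrow> {b, c} \<in> E \<Longrightarrow> a \<noteq> c \<Longrightarrow> apex {{a, b}, {b, c}} = b"
  by (simp add: apex_eq corner_in_angles)

definition shared_edge :: "'a set set set \<Rightarrow> 'a set" where
  "shared_edge \<epsilon> = the_elem (\<Inter>\<epsilon>)"

lemma shared_edge_eq: "X \<inter> Y = {g} \<Longrightarrow> shared_edge {X, Y} = g"
  unfolding shared_edge_def by simp

lemma consecutive_corners:
  assumes "{a, b} \<in> E" "{b, c} \<in> E" "{c, d} \<in> E" "a \<noteq> c" "b \<noteq> d"
  shows "{{{a, b}, {b, c}}, {{b, c}, {c, d}}} \<in> angle_edges"
    and "shared_edge {{{a, b}, {b, c}}, {{b, c}, {c, d}}} = {b, c}"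
proof -
  have "b \<noteq> c"
    using assms(2) edge_ends_distinct by blast
  then have "{a, b} \<noteq> {c, d}" "{a, b} \<noteq> {b, c}" "{b, c} \<noteq> {c, d}"
    using assms(4,5) by (auto simp: doubleton_eq_iff)
  then have inter: "{{a, b}, {b, c}} \<inter> {{b, c}, {c, d}} = {{b, c}}"
    and "{{a, b}, {b, c}} \<noteq> {{b, c}, {c, d}}"
    by (auto simp: doubleton_eq_iff)
  then show "{{{a, b}, {b, c}}, {{b, c}, {c, d}}} \<in> angle_edges"
    using angle_edgesI corner_in_angles assms inter by simp
  show "shared_edge {{{a, b}, {b, c}}, {{b, c}, {c, d}}} = {b, c}"
    using inter by (rule shared_edge_eq)
qed

lemma angle_chain_walk:
  assumes "walk E (y # xs @ [z])" "no_backtrack (y # xs @ [z])" "xs \<noteq> []"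
  shows "set (angle_chain (y # xs @ [z])) \<subseteq> angles \<and> map apex (angle_chain (y # xs @ [z])) = xs
    \<and> walk angle_edges (angle_chain (y # xs @ [z]))
    \<and> map shared_edge (path_edges (angle_chain (y # xs @ [z]))) = path_edges xs"
  using assms
proof (induction xs arbitrary: y)
  case (Cons b xs)
  show ?case
  proof (cases xs)
    case Nil
    then show ?thesis
      using Cons.prems by (simp add: corner_in_angles apex_corner)
  next
    case (Cons c xs')
    let ?d = "hd (xs' @ [z])"
    have IH: "set (angle_chain (b # xs @ [z])) \<subseteq> angles" "map apex (angle_chain (b # xs @ [z])) = xs"
      "walk angle_edges (angle_chain (b # xs @ [z]))"
      "map shared_edge (path_edges (angle_chain (b # xs @ [z]))) = path_edges xs"
      using Cons.IH[of b] Cons.prems \<open>xs = c # xs'\<close> by simp_all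
    have edges: "{y, b} \<in> E" "{b, c} \<in> E" "{c, ?d} \<in> E" "y \<noteq> c" "b \<noteq> ?d"
      using Cons.prems \<open>xs = c # xs'\<close> by (cases xs'; simp)+
    have tail: "angle_chain (b # c # xs' @ [z]) = {{b, c}, {c, ?d}} # angle_chain (c # xs' @ [z])"
      by (cases xs') simp_all
    have "angle_chain (y # (b # xs) @ [z]) = {{y, b}, {b, c}} # angle_chain (b # xs @ [z])"
      using \<open>xs = c # xs'\<close> by simp
    then show ?thesis
      using IH consecutive_corners[OF edges] corner_in_angles[OF edges(1,2,4)]
        apex_corner[OF edges(1,2,4)] \<open>xs = c # xs'\<close>
      by (simp add: tail)
  qed
qed simp

lemma rotation_about_apex:
  assumes "X = {e, f}" "e \<in> E" "f \<in> E" "t \<in> E" "e \<noteq> f" "e \<noteq> t" "f \<noteq> t"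
    "w \<in> e" "w \<in> f" "w \<in> t" "s \<in> {e, f}"
  shows "{X, {s, t}} \<in> angle_edges" "shared_edge {X, {s, t}} = s" "\<Union>{X, {s, t}} = {e, f, t}"
proof -
  obtain h where h: "X = {s, h}" "h \<in> E" "h \<noteq> s" "h \<noteq> t" "w \<in> h"
    using assms by (cases "s = e") (auto simp: insert_commute)
  have "s \<in> E" "w \<in> s" "s \<noteq> t"
    using assms by auto
  have inter: "X \<inter> {s, t} = {s}"
    using h \<open>s \<noteq> t\<close> by blast
  have "X \<in> angles" "{s, t} \<in> angles"
    using anglesI h \<open>s \<in> E\<close> \<open>w \<in> s\<close> \<open>s \<noteq> t\<close> assms(4,10) by blast+
  moreover have "X \<noteq> {s, t}"
    using h by blast
  ultimately show "{X, {s, t}} \<in> angle_edges"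
    using angle_edgesI inter by blast
  show "shared_edge {X, {s, t}} = s"
    using inter by (rule shared_edge_eq)
  show "\<Union>{X, {s, t}} = {e, f, t}"
    using assms(1,11) by blast
qed

end

section \<open>The colouring\<close>

locale tree_colouring = cubic_graph +
  fixes T :: "'a set set" and idx :: "'a set \<Rightarrow> nat" and m :: nat
  assumes tree_subset: "T \<subseteq> E"
    and inj_idx: "inj_on idx T"
    and idx_less: "g \<in> T \<Longrightarrow> idx g < m - 1"
    and m_pos: "0 < m"
    and tree_connected: "walk_connected T V"
begin

definition spare_edge :: "'a \<Rightarrow> 'a set" where
  "spare_edge w = (SOME x. x \<in> E \<and> x \<notin> T \<and> w \<in> x)"

definition colour :: "'a set set set \<Rightarrow> nat" where
  "colour \<epsilon> = (if shared_edge \<epsilon> \<in> T then idx (shared_edge \<epsilon>)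
     else if \<exists>w. (\<forall>x\<in>\<Union>\<epsilon>. w \<in> x) \<and> shared_edge \<epsilon> = spare_edge w then m - 1 else m)"

lemma colour_le: "colour \<epsilon> \<le> m"
proof -
  have "shared_edge \<epsilon> \<in> T \<Longrightarrow> idx (shared_edge \<epsilon>) \<le> m"
    using idx_less[of "shared_edge \<epsilon>"] by simp
  then show ?thesis
    by (simp add: colour_def)
qed

lemma colour_rotation:
  assumes "X = {e, f}" "e \<in> E" "f \<in> E" "t \<in> E" "e \<noteq> f" "e \<noteq> t" "f \<noteq> t"
    "w \<in> e" "w \<in> f" "w \<in> t" "s \<in> {e, f}"
  shows "colour {X, {s, t}} = (if s \<in> T then idx s else if s = spare_edge w then m - 1 else m)"
proof -
  note rot = rotation_about_apex[OF assms]
  \<comment> \<open>\<open>w\<close> is the only vertex on all three edges, as \<open>e\<close> and \<open>f\<close> meet only there\<close>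
  have "(\<exists>w'. (\<forall>x\<in>{e, f, t}. w' \<in> x) \<and> s = spare_edge w') \<longleftrightarrow> s = spare_edge w"
  proof
    assume "\<exists>w'. (\<forall>x\<in>{e, f, t}. w' \<in> x) \<and> s = spare_edge w'"
    then obtain w' where "w' \<in> e" "w' \<in> f" "s = spare_edge w'"
      by blast
    then show "s = spare_edge w"
      using edges_meet_at_most_once[OF assms(2,3,5), of w' w] assms(8,9) by simp
  next
    assume "s = spare_edge w"
    then show "\<exists>w'. (\<forall>x\<in>{e, f, t}. w' \<in> x) \<and> s = spare_edge w'"
      using assms(8-10) by blast
  qed
  then show ?thesis
    using rot(2,3) by (simp add: colour_def)
qed

lemma spare_edge_in_angle:
  assumes "w \<in> V" "e \<in> E" "f \<in> E" "t \<in> T" "w \<in> e" "w \<in> f" "w \<in> t"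
    "e \<noteq> f" "e \<noteq> t" "f \<noteq> t" "e \<notin> T"
  shows "spare_edge w \<in> {e, f}"
proof -
  have "t \<in> E"
    using assms(4) tree_subset by blast
  have "\<exists>x. x \<in> E \<and> x \<notin> T \<and> w \<in> x"
    using assms(2,5,11) by blast
  then have spare: "spare_edge w \<in> E \<and> spare_edge w \<notin> T \<and> w \<in> spare_edge w"
    unfolding spare_edge_def by (rule someI_ex)
  then have "spare_edge w \<in> {x \<in> E. w \<in> x}"
    by simp
  then have "spare_edge w \<in> {e, f, t}"
    by (simp only: incident_edges_eq[OF assms(1-3) \<open>t \<in> E\<close> assms(5-10)])
  then show ?thesis
    using spare assms(4) by auto
qed

lemma rotation_with_colour:
  assumes "X = {e, f}" "e \<in> E" "f \<in> E" "t \<in> T" "e \<noteq> f" "e \<noteq> t" "f \<noteq> t"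
    "w \<in> V" "w \<in> e" "w \<in> f" "w \<in> t" "c \<in> {m - 1, m}"
  obtains s where "s \<in> {e, f}" "colour {X, {s, t}} = (if s \<in> T then idx s else c)"
proof -
  have "t \<in> E"
    using assms(4) tree_subset by blast
  note rot_colour = colour_rotation[OF assms(1-3) \<open>t \<in> E\<close> assms(5-7,9-11)]
  consider "e \<in> T" | "f \<in> T" | "e \<notin> T" "f \<notin> T"
    by blast
  then show thesis
  proof cases
    case 1
    then show thesis
      using that[of e] rot_colour[of e] by simp
  next
    case 2
    then show thesis
      using that[of f] rot_colour[of f] by simp
  next
    case 3
    \<comment> \<open>pivot about the spare edge at \<open>w\<close> for colour \<open>m - 1\<close>, about the other edge for \<open>m\<close>\<close>
    have spare: "spare_edge w \<in> {e, f}"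
      using spare_edge_in_angle[OF assms(8,2,3,4,9-11,5-7) 3(1)] .
    show thesis
    proof (cases "c = m - 1")
      case True
      then show thesis
        using that[of "spare_edge w"] rot_colour[OF spare] spare 3 by auto
    next
      case False
      define s where "s = (if spare_edge w = e then f else e)"
      have "s \<in> {e, f}" "s \<notin> T" "s \<noteq> spare_edge w"
        using spare 3 assms(5) by (auto simp: s_def)
      then show thesis
        using that[of s] rot_colour[of s] False assms(12) by auto
    qed
  qed
qed

lemma rotate_onto_tree_edge:
  assumes X: "X \<in> angles" and t: "t \<in> T" "apex X \<in> t" and c: "c \<in> {m - 1, m}"
  obtains s where "s \<in> E" "s \<noteq> t" "apex X \<in> s"
    "X = {s, t} \<or> {X, {s, t}} \<in> angle_edges \<and> colour {X, {s, t}} = (if s \<in> T then idx s else c)"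
proof -
  define w where "w = apex X"
  obtain e f where ef: "X = {e, f}" "e \<in> E" "f \<in> E" "e \<noteq> f" "w \<in> e" "w \<in> f"
    using angle_cases[OF X] unfolding w_def by blast
  have "t \<in> E" "w \<in> t" "w \<in> V"
    using t tree_subset apex_in_V[OF X] unfolding w_def by auto
  show thesis
  proof (cases "t \<in> X")
    case True
    then show thesis
      using that[of e] that[of f] ef unfolding w_def by (auto simp: insert_commute)
  next
    case False
    then have et: "e \<noteq> t" "f \<noteq> t"
      using ef(1) by auto
    obtain s where s: "s \<in> {e, f}" "colour {X, {s, t}} = (if s \<in> T then idx s else c)"
      using rotation_with_colour[OF ef(1-3) t(1) ef(4) et \<open>w \<in> V\<close> ef(5,6) \<open>w \<in> t\<close> c] .
    then show thesis
      using that[of s] rotation_about_apex[OF ef(1-3) \<open>t \<in> E\<close> ef(4) et ef(5,6) \<open>w \<in> t\<close> s(1)] ef et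
      unfolding w_def by auto
  qed
qed

lemma colour_pivots_in_tree:
  assumes "set gs \<subseteq> T" "map shared_edge P = gs"
  shows "map colour P = map idx gs"
proof -
  have "\<forall>\<epsilon>\<in>set P. shared_edge \<epsilon> \<in> T"
    using assms by auto
  then have "map colour P = map idx (map shared_edge P)"
    by (simp add: colour_def)
  then show ?thesis
    by (simp add: assms(2))
qed

lemma angle_path_along_tree_walk:
  assumes xs: "walk T xs" "distinct xs" "xs = w # x # r" "xs = p @ [u, w']"
    and ends: "{w, y} \<in> E" "y \<noteq> x" "{w', z} \<in> E" "z \<noteq> u"
  defines "M \<equiv> angle_chain (y # xs @ [z])"
  shows "is_path (angles, angle_edges) M" "rainbow_path colour M"
    "colour ` set (path_edges M) = idx ` set (path_edges xs)"
    "hd M = {{w, y}, {w, x}}" "last M = {{w', z}, {u, w'}}"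
    "X \<in> set M \<Longrightarrow> apex X = w \<Longrightarrow> X = hd M" "X \<in> set M \<Longrightarrow> apex X = w' \<Longrightarrow> X = last M"
proof -
  have "hd xs = w" "last xs = w'"
    by (simp add: xs(3)) (simp add: xs(4))
  then have "walk E (y # xs @ [z])"
    using walk_extend_ends[OF walk_mono[OF xs(1) tree_subset]] ends(1,3) by (simp add: insert_commute)
  moreover have "no_backtrack (y # xs @ [z])"
    by (rule no_backtrack_extend_ends[OF xs(2-4) ends(2,4)])
  moreover have "xs \<noteq> []"
    using xs(3) by simp
  ultimately have chain: "set M \<subseteq> angles" "map apex M = xs" "walk angle_edges M"
    "map shared_edge (path_edges M) = path_edges xs"
    unfolding M_def by (blast dest: angle_chain_walk)+
  have "distinct (map apex M)"
    using chain(2) xs(2) by simp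
  then have inj: "inj_on apex (set M)" and "distinct M"
    by (simp_all add: distinct_map)
  then show "is_path (angles, angle_edges) M"
    using chain(1,3) by (simp add: is_path_iff_walk)
  have tree: "set (path_edges xs) \<subseteq> T"
    by (rule walk_path_edges[OF xs(1)])
  then have colours: "map colour (path_edges M) = map idx (path_edges xs)"
    using chain(4) by (rule colour_pivots_in_tree)
  then show "rainbow_path colour M"
    using inj_on_subset[OF inj_idx tree] distinct_path_edges[OF xs(2)]
    by (simp add: rainbow_path_def distinct_map)
  show "colour ` set (path_edges M) = idx ` set (path_edges xs)"
    using colours by (metis list.set_map)
  show "hd M = {{w, y}, {w, x}}"
    using xs(3) unfolding M_def by (simp add: insert_commute)
  show "last M = {{w', z}, {u, w'}}"
    using last_angle_chain[of "y # p" u w' z] xs(4) unfolding M_def by (simp add: insert_commute)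
  have "M \<noteq> []"
    using chain(2) xs(3) by auto
  then have "apex (hd M) = w" "apex (last M) = w'"
    using chain(2) \<open>hd xs = w\<close> \<open>last xs = w'\<close> hd_map[of M apex] last_map[of M apex] by simp_all
  then show "X \<in> set M \<Longrightarrow> apex X = w \<Longrightarrow> X = hd M" "X \<in> set M \<Longrightarrow> apex X = w' \<Longrightarrow> X = last M"
    using inj_onD[OF inj, of X "hd M"] inj_onD[OF inj, of X "last M"] \<open>M \<noteq> []\<close> by auto
qed

lemma end_colour_fresh:
  assumes "set ts \<subseteq> T" "s \<notin> set ts" "m - 1 \<le> c"
  shows "(if s \<in> T then idx s else c) \<notin> idx ` set ts"
proof
  assume "(if s \<in> T then idx s else c) \<in> idx ` set ts"
  then obtain g where g: "g \<in> set ts" "(if s \<in> T then idx s else c) = idx g"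
    by blast
  then have "g \<in> T"
    using assms(1) by blast
  show False
  proof (cases "s \<in> T")
    case True
    then show False
      using g inj_onD[OF inj_idx, of s g] \<open>g \<in> T\<close> assms(2) by auto
  next
    case False
    then show False
      using g idx_less[OF \<open>g \<in> T\<close>] assms(3) by simp
  qed
qed

lemma end_colours_differ:
  assumes "s \<in> T \<Longrightarrow> s' \<in> T \<Longrightarrow> s \<noteq> s'"
  shows "(if s \<in> T then idx s else m - 1) \<noteq> (if s' \<in> T then idx s' else m)"
  using assms inj_onD[OF inj_idx, of s s'] idx_less[of s] idx_less[of s'] m_pos by auto

lemma end_colours_along_tree_walk:
  assumes xs: "walk T xs" "distinct xs" "xs = w # x # r" "xs = p @ [u, w']" "{w, w'} \<in> T \<Longrightarrow> x = w'"
    and "w \<noteq> w'" and s: "s \<in> E" "w \<in> s" "s \<noteq> {w, x}" and s': "w' \<in> s'" "s' \<noteq> {u, w'}"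
  shows "(if s \<in> T then idx s else m - 1) \<notin> idx ` set (path_edges xs)"
    and "(if s' \<in> T then idx s' else m) \<notin> idx ` set (path_edges xs)"
    and "(if s \<in> T then idx s else m - 1) \<noteq> (if s' \<in> T then idx s' else m)"
proof -
  have tree: "set (path_edges xs) \<subseteq> T"
    by (rule walk_path_edges[OF xs(1)])
  have "s \<notin> set (path_edges xs)"
    using notin_path_edges_at_hd[of w x r s] xs(2) s(2,3) unfolding xs(3) by blast
  then show "(if s \<in> T then idx s else m - 1) \<notin> idx ` set (path_edges xs)"
    using end_colour_fresh[OF tree] by simp
  have "s' \<notin> set (path_edges xs)"
    using notin_path_edges_at_last[of p u w' s'] xs(2) s' unfolding xs(4) by blast
  then show "(if s' \<in> T then idx s' else m) \<notin> idx ` set (path_edges xs)"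
    using end_colour_fresh[OF tree] by simp
  \<comment> \<open>a common end edge would be a tree edge \<open>{w, w'}\<close>, but then the shortest tree walk is that edge\<close>
  have "s \<noteq> s'" if "s \<in> T"
  proof
    assume "s = s'"
    then have "s = {w, w'}"
      using edge_eq_doubleton[OF s(1,2) _ \<open>w \<noteq> w'\<close>] s'(1) by simp
    then show False
      using xs(5) that s(3) by simp
  qed
  then show "(if s \<in> T then idx s else m - 1) \<noteq> (if s' \<in> T then idx s' else m)"
    using end_colours_differ by blast
qed

lemma shortest_tree_walk:
  assumes "w \<in> V" "w' \<in> V" "w \<noteq> w'"
  obtains xs x r p u where "walk T xs" "distinct xs" "xs = w # x # r" "xs = p @ [u, w']"
    "{w, x} \<in> T" "{u, w'} \<in> T" "{w, w'} \<in> T \<Longrightarrow> x = w'"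
proof -
  obtain xs where xs: "walk T xs" "hd xs = w" "last xs = w'" "distinct xs"
    "3 \<le> length xs \<Longrightarrow> {w, w'} \<notin> T"
    using tree_connected assms(1,2) shortest_walk unfolding walk_connected_def by metis
  obtain x r where xs_Cons: "xs = w # x # r"
    using xs(1-3) assms(3) by (cases xs rule: remdups_adj.cases) auto
  obtain p u where xs_snoc: "xs = p @ [u, w']"
    using xs(3) xs_Cons by (metis append_butlast_last_id butlast.simps(2) last_ConsR list.distinct(1)
        rev_exhaust append.assoc append_Cons append_Nil)
  have "{w, x} \<in> T" "{u, w'} \<in> T"
    using xs(1) xs_Cons xs_snoc walk_append[of T p u "[w']"] by simp_all
  moreover have "x = w'" if "{w, w'} \<in> T"
    using xs(3,5) that xs_Cons by (cases r) auto
  ultimately show thesis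
    using that xs(1,4) xs_Cons xs_snoc by blast
qed

lemma rainbow_path_distinct_apexes:
  assumes \<alpha>: "\<alpha> \<in> angles" and \<beta>: "\<beta> \<in> angles" and apexes: "apex \<alpha> \<noteq> apex \<beta>"
  obtains P where "is_path (angles, angle_edges) P" "hd P = \<alpha>" "last P = \<beta>" "rainbow_path colour P"
proof -
  define w w' where "w = apex \<alpha>" and "w' = apex \<beta>"
  have "w \<in> V" "w' \<in> V" "w \<noteq> w'"
    using apex_in_V[OF \<alpha>] apex_in_V[OF \<beta>] apexes unfolding w_def w'_def by simp_all
  then obtain xs x r p u where xs: "walk T xs" "distinct xs" "xs = w # x # r" "xs = p @ [u, w']"
    "{w, x} \<in> T" "{u, w'} \<in> T" "{w, w'} \<in> T \<Longrightarrow> x = w'"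
    using shortest_tree_walk by blast
  obtain s where s: "s \<in> E" "s \<noteq> {w, x}" "w \<in> s" and
    \<alpha>_step: "\<alpha> = {s, {w, x}} \<or> {\<alpha>, {s, {w, x}}} \<in> angle_edges
      \<and> colour {\<alpha>, {s, {w, x}}} = (if s \<in> T then idx s else m - 1)"
    using rotate_onto_tree_edge[OF \<alpha> xs(5), of "m - 1"] unfolding w_def by auto
  obtain s' where s': "s' \<in> E" "s' \<noteq> {u, w'}" "w' \<in> s'" and
    \<beta>_step: "\<beta> = {s', {u, w'}} \<or> {\<beta>, {s', {u, w'}}} \<in> angle_edges
      \<and> colour {\<beta>, {s', {u, w'}}} = (if s' \<in> T then idx s' else m)"
    using rotate_onto_tree_edge[OF \<beta> xs(6), of m] unfolding w'_def by auto
  obtain y z where y: "s = {w, y}" "y \<noteq> x" and z: "s' = {w', z}" "z \<noteq> u"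
    using edge_other_end[OF s(1,3)] edge_other_end[OF s'(1,3)] s(2) s'(2) by (metis insert_commute)
  define M where "M = angle_chain (y # xs @ [z])"
  note M = angle_path_along_tree_walk[OF xs(1-4) s(1)[unfolded y] y(2) s'(1)[unfolded z] z(2),
      folded M_def]
  note fresh = end_colours_along_tree_walk[OF xs(1-4,7) \<open>w \<noteq> w'\<close> s(1,3,2) s'(3,2)]
  show thesis
  proof (rule rainbow_path_extend_ends[of "(angles, angle_edges)" M colour \<alpha> \<beta>])
    show "\<alpha> = hd M \<or> {\<alpha>, hd M} \<in> snd (angles, angle_edges)
        \<and> colour {\<alpha>, hd M} = (if s \<in> T then idx s else m - 1)"
      using \<alpha>_step M(4) y(1) by simp
    show "\<beta> = last M \<or> {\<beta>, last M} \<in> snd (angles, angle_edges)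
        \<and> colour {\<beta>, last M} = (if s' \<in> T then idx s' else m)"
      using \<beta>_step M(5) z(1) by simp
    show "(if s \<in> T then idx s else m - 1) \<notin> colour ` set (path_edges M)"
      "(if s' \<in> T then idx s' else m) \<notin> colour ` set (path_edges M)"
      "(if s \<in> T then idx s else m - 1) \<noteq> (if s' \<in> T then idx s' else m)"
      using fresh unfolding M(3) by simp_all
    show "is_path (angles, angle_edges) M" "rainbow_path colour M"
      by (fact M(1), fact M(2))
    show "\<alpha> \<in> fst (angles, angle_edges)" "\<beta> \<in> fst (angles, angle_edges)" "\<alpha> \<noteq> \<beta>"
      using \<alpha> \<beta> apexes by auto
    show "\<alpha> \<in> set M \<Longrightarrow> \<alpha> = hd M" "\<beta> \<in> set M \<Longrightarrow> \<beta> = last M"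
      using M(6)[of \<alpha>] M(7)[of \<beta>] unfolding w_def w'_def by simp_all
  qed (fact that)
qed

theorem rainbow_connected_colour: "rainbow_connected (angles, angle_edges) colour"
  unfolding rainbow_connected_def
proof (intro ballI)
  fix \<alpha> \<beta>
  assume "\<alpha> \<in> fst (angles, angle_edges)" "\<beta> \<in> fst (angles, angle_edges)"
  then have \<alpha>: "\<alpha> \<in> angles" and \<beta>: "\<beta> \<in> angles"
    by simp_all
  consider "\<alpha> = \<beta>" | "\<alpha> \<noteq> \<beta>" "apex \<alpha> = apex \<beta>" | "apex \<alpha> \<noteq> apex \<beta>"
    by blast
  then show "\<exists>P. is_path (angles, angle_edges) P \<and> hd P = \<alpha> \<and> last P = \<beta> \<and> rainbow_path colour P"
  proof cases
    case 1
    then show ?thesis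
      using \<alpha> by (intro exI[of _ "[\<alpha>]"]) (simp add: is_path_iff_walk rainbow_path_def)
  next
    case 2
    then show ?thesis
      using \<alpha> \<beta> angles_same_apex_adjacent[OF \<alpha> \<beta>]
      by (intro exI[of _ "[\<alpha>, \<beta>]"]) (simp add: is_path_iff_walk rainbow_path_def)
  next
    case 3
    obtain P where "is_path (angles, angle_edges) P" "hd P = \<alpha>" "last P = \<beta>" "rainbow_path colour P"
      using rainbow_path_distinct_apexes[OF \<alpha> \<beta> 3] .
    then show ?thesis
      by blast
  qed
qed

end

theorem corollary4p1:
  fixes G :: "'a graph"
  assumes "simple_graph G" and "connected_graph G" and "cubic G"
  shows "rc (line_graph (line_graph G)) \<le> card (fst G) + 1"
proof -
  obtain V E where G: "G = (V, E)"
    by fastforce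
  interpret cubic_graph V E
    using assms(1,3) G by unfold_locales auto
  have "V \<noteq> {}" "walk_connected E V"
    using assms(2) connected_graph_walk_connected[OF assms(2)] G by (auto simp: connected_graph_def)
  then obtain T where T: "T \<subseteq> E" "finite T" "card T + 1 = card V" "walk_connected T V"
    using spanning_tree_exists[OF finite_V] edge_subset_V by blast
  obtain idx where idx: "bij_betw idx T {0..<card T}"
    using ex_bij_betw_finite_nat[OF T(2)] by blast
  have "idx g < card V - 1" if "g \<in> T" for g
    using bij_betwE[OF idx] that T(3) by fastforce
  then interpret tree_colouring V E T idx "card V"
    using T idx by unfold_locales (auto simp: bij_betw_def)
  have "\<exists>c. (\<forall>\<epsilon>\<in>angle_edges. c \<epsilon> < card V + 1) \<and> rainbow_connected (angles, angle_edges) c"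
    using colour_le rainbow_connected_colour by (intro exI[of _ colour]) (simp add: less_Suc_eq_le)
  then show ?thesis
    unfolding rc_def G line_graph_line_graph by (auto intro: Least_le)
qed

end
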